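(* Let $\Lambda_1,\Lambda_2$ be finite sets of formulas and let $\Gamma_1,\Gamma_2,\Delta_1,\Delta_2$ be finite multisets of formulas such that the sequent $\Gamma_1,\Gamma_2\Rightarrow\Delta_1,\Delta_2$ is provable in $\mathsf{Grz}_\infty$. Then there exists a formula $I$ such that $\mathit{pos}(I)\subseteq\mathit{neg}(\Gamma_1\Rightarrow\Delta_1)\cap\mathit{pos}(\Gamma_2\Rightarrow\Delta_2)$, $\mathit{neg}(I)\subseteq\mathit{pos}(\Gamma_1\Rightarrow\Delta_1)\cap\mathit{neg}(\Gamma_2\Rightarrow\Delta_2)$, and $$\mathsf{Grz}\vdash\bigwedge(\Lambda_1^\ast\cup\Gamma_1)\to\bigvee(\Delta_1\cup\{I\})\quad\text{and}\quad \mathsf{Grz}\vdash\bigwedge(\Lambda_2^\ast\cup\{I\}\cup\Gamma_2)\to\bigvee\Delta_2,$$ where $\Lambda^\ast=\{\Box(A\to\Box A)\mid A\in\Lambda\}$.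
   Context: Formulas are built from $\bot$ and atomic propositions using $\to$ and $\Box$; $\neg A:=A\to\bot$, $\top:=\neg\bot$, $A\wedge B:=\neg(A\to\neg B)$, $A\vee B:=\neg A\to B$, $\Diamond A:=\neg\Box\neg A$; empty conjunction is $\top$ and empty disjunction is $\bot$. The logic $\mathsf{Grz}$ is axiomatized by all Boolean tautologies, $\Box(A\to B)\to(\Box A\to\Box B)$, $\Box A\to\Box\Box A$, $\Box A\to A$, $\Box(\Box(A\to\Box A)\to A)\to\Box A$, with modus ponens and necessitation $A/\Box A$. A sequent is $\Gamma\Rightarrow\Delta$ with $\Gamma,\Delta$ finite multisets of formulas; $\Box\Pi$ denotes $\{\Box B:B\in\Pi\}$. The calculus $\mathsf{Grz}_\infty$ has initial sequents $\Gamma,p\Rightarrow p,\Delta$ ($p$ atomic), $\Gamma,\bot\Rightarrow\Delta$, and rules $(\to_L)$ from $\Gamma,B\Rightarrow\Delta$ and $\Gamma\Rightarrow A,\Delta$ infer $\Gamma,A\to B\Rightarrow\Delta$; $(\to_R)$ from $\Gamma,A\Rightarrow B,\Delta$ infer $\Gamma\Rightarrow A\to B,\Delta$; $(\mathsf{refl})$ from $\Gamma,B,\Box B\Rightarrow\Delta$ infer $\Gamma,\Box B\Rightarrow\Delta$; $(\Box)$ from left premise $\Gamma,\Box\Pi\Rightarrow A,\Delta$ and right premise $\Box\Pi\Rightarrow A$ infer $\Gamma,\Box\Pi\Rightarrow\Box A,\Delta$. An $\infty$-proof is a possibly infinite tree of sequents built by these rules with leaves labelled by initial sequents, in which every infinite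 branch passes through a right premise of $(\Box)$ infinitely often; a sequent is provable if it labels the root of an $\infty$-proof. For a formula or set of formulas $X$, $\mathit{pos}(X)$ ($\mathit{neg}(X)$) is the set of atoms with a positive (negative) occurrence in $X$, polarity being standard: $p$ is positive in $p$, polarity is preserved in $B$ within $A\to B$ and $\Box B$, and reversed in $A$ within $A\to B$. For a sequent, $\mathit{pos}(\Gamma\Rightarrow\Delta)=\mathit{pos}(\Delta)\cup\mathit{neg}(\Gamma)$ and $\mathit{neg}(\Gamma\Rightarrow\Delta)=\mathit{neg}(\Delta)\cup\mathit{pos}(\Gamma)$. *)

theory Defs
  imports Main "HOL-Library.Multiset"
begin

datatype 'a fm = Bot | At 'a | Imp "'a fm" "'a fm" | Box "'a fm"

definition Neg :: "'a fm \<Rightarrow> 'a fm" where "Neg A = Imp A Bot"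
definition Top :: "'a fm" where "Top = Neg Bot"
definition And :: "'a fm \<Rightarrow> 'a fm \<Rightarrow> 'a fm" where "And A B = Neg (Imp A (Neg B))"
definition Or :: "'a fm \<Rightarrow> 'a fm \<Rightarrow> 'a fm" where "Or A B = Imp (Neg A) B"
definition Dia :: "'a fm \<Rightarrow> 'a fm" where "Dia A = Neg (Box (Neg A))"

fun conj :: "'a fm list \<Rightarrow> 'a fm" where
  "conj [] = Top"
| "conj (A # As) = And A (conj As)"

fun disj :: "'a fm list \<Rightarrow> 'a fm" where
  "disj [] = Bot"
| "disj (A # As) = Or A (disj As)"

text \<open>Boolean tautologies: formulas true under every valuation treating atoms and boxed
formulas as propositional variables.\<close>
fun peval :: "('a fm \<Rightarrow> bool) \<Rightarrow> 'a fm \<Rightarrow> bool" where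
  "peval v Bot = False"
| "peval v (At p) = v (At p)"
| "peval v (Imp A B) = (peval v A \<longrightarrow> peval v B)"
| "peval v (Box A) = v (Box A)"

definition taut :: "'a fm \<Rightarrow> bool" where "taut A = (\<forall>v. peval v A)"

inductive Grz :: "'a fm \<Rightarrow> bool" where
  taut: "taut A \<Longrightarrow> Grz A"
| K: "Grz (Imp (Box (Imp A B)) (Imp (Box A) (Box B)))"
| four: "Grz (Imp (Box A) (Box (Box A)))"
| T: "Grz (Imp (Box A) A)"
| grz: "Grz (Imp (Box (Imp (Box (Imp A (Box A))) A)) (Box A))"
| mp: "Grz (Imp A B) \<Longrightarrow> Grz A \<Longrightarrow> Grz B"
| nec: "Grz A \<Longrightarrow> Grz (Box A)"

type_synonym 'a sequent = "'a fm multiset \<times> 'a fm multiset"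

datatype rule = Ax | ImpL | ImpR | Refl | BoxR

fun arity :: "rule \<Rightarrow> nat" where
  "arity Ax = 0" | "arity ImpL = 2" | "arity ImpR = 1" | "arity Refl = 1" | "arity BoxR = 2"

text \<open>For ImpL premise 0 is \<open>\<Gamma>,B \<Rightarrow> \<Delta>\<close> and premise 1 is \<open>\<Gamma> \<Rightarrow> A,\<Delta>\<close>;
  for BoxR premise 0 is the left and premise 1 the right premise.\<close>
fun rule_ok :: "rule \<Rightarrow> 'a sequent \<Rightarrow> 'a sequent list \<Rightarrow> bool" where
  "rule_ok Ax (\<Gamma>, \<Delta>) ps \<longleftrightarrow> ps = [] \<and> ((\<exists>p. At p \<in># \<Gamma> \<and> At p \<in># \<Delta>) \<or> Bot \<in># \<Gamma>)"
| "rule_ok ImpL (\<Gamma>, \<Delta>) ps \<longleftrightarrow> (\<exists>\<Gamma>' A B. \<Gamma> = \<Gamma>' + {#Imp A B#} \<and>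
      ps = [(\<Gamma>' + {#B#}, \<Delta>), (\<Gamma>', {#A#} + \<Delta>)])"
| "rule_ok ImpR (\<Gamma>, \<Delta>) ps \<longleftrightarrow> (\<exists>\<Delta>' A B. \<Delta> = {#Imp A B#} + \<Delta>' \<and>
      ps = [(\<Gamma> + {#A#}, {#B#} + \<Delta>')])"
| "rule_ok Refl (\<Gamma>, \<Delta>) ps \<longleftrightarrow> (\<exists>\<Gamma>' B. \<Gamma> = \<Gamma>' + {#Box B#} \<and>
      ps = [(\<Gamma>' + {#B#} + {#Box B#}, \<Delta>)])"
| "rule_ok BoxR (\<Gamma>, \<Delta>) ps \<longleftrightarrow> (\<exists>\<Gamma>' \<Pi> \<Delta>' A. \<Gamma> = \<Gamma>' + image_mset Box \<Pi> \<and>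
      \<Delta> = {#Box A#} + \<Delta>' \<and>
      ps = [(\<Gamma>' + image_mset Box \<Pi>, {#A#} + \<Delta>'), (image_mset Box \<Pi>, {#A#})])"

text \<open>An \<open>\<infinity>\<close>-proof as a (possibly infinite) tree: nodes are positions (lists of child
  indices), each node carries a sequent and a rule; the children of a node are exactly the
  positions \<open>p @ [i]\<close> with \<open>i < arity\<close>.\<close>
definition inf_proof :: "nat list set \<Rightarrow> (nat list \<Rightarrow> 'a sequent) \<Rightarrow> (nat list \<Rightarrow> rule) \<Rightarrow> bool" where
  "inf_proof N lab rl \<longleftrightarrow>
     [] \<in> N \<and>
     (\<forall>p i. p @ [i] \<in> N \<longrightarrow> p \<in> N) \<and>
     (\<forall>p\<in>N. \<forall>i. (p @ [i] \<in> N \<longleftrightarrow> i < arity (rl p))) \<and>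
     (\<forall>p\<in>N. rule_ok (rl p) (lab p) (map (\<lambda>i. lab (p @ [i])) [0..<arity (rl p)])) \<and>
     (\<forall>f :: nat \<Rightarrow> nat list. f 0 = [] \<and> (\<forall>n. f (Suc n) \<in> N \<and> (\<exists>i. f (Suc n) = f n @ [i]))
        \<longrightarrow> infinite {n. rl (f n) = BoxR \<and> f (Suc n) = f n @ [1]})"

definition Grz_inf_provable :: "'a sequent \<Rightarrow> bool" where
  "Grz_inf_provable S \<longleftrightarrow> (\<exists>N lab rl. inf_proof N lab rl \<and> lab [] = S)"

fun pos :: "'a fm \<Rightarrow> 'a set" and neg :: "'a fm \<Rightarrow> 'a set" where
  "pos Bot = {}" | "neg Bot = {}"
| "pos (At p) = {p}" | "neg (At p) = {}"
| "pos (Imp A B) = neg A \<union> pos B" | "neg (Imp A B) = pos A \<union> neg B"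
| "pos (Box A) = pos A" | "neg (Box A) = neg A"

definition pos_ms :: "'a fm multiset \<Rightarrow> 'a set" where "pos_ms M = (\<Union>A\<in>set_mset M. pos A)"
definition neg_ms :: "'a fm multiset \<Rightarrow> 'a set" where "neg_ms M = (\<Union>A\<in>set_mset M. neg A)"

definition pos_seq :: "'a sequent \<Rightarrow> 'a set" where
  "pos_seq S = pos_ms (snd S) \<union> neg_ms (fst S)"
definition neg_seq :: "'a sequent \<Rightarrow> 'a set" where
  "neg_seq S = neg_ms (snd S) \<union> pos_ms (fst S)"

definition star :: "'a fm set \<Rightarrow> 'a fm set" where
  "star \<Lambda> = {Box (Imp A (Box A)) | A. A \<in> \<Lambda>}"

end

theory Submission
  imports Defs
begin

(* The interpolant is built by Maehara's method along the \<infinity>-proof: every node is shown to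
   have an interpolant for every splitting of its sequent into a first and a second component.
   Propositional rules combine the interpolants of their premises. For a (\<box>)-step whose
   principal formula \<box>A lies in the first component there are two cases. If A \<in> \<Lambda>1, the
   left premise suffices, because \<box>(A \<rightarrow> \<box>A) \<in> \<Lambda>1* yields A \<rightarrow> \<box>A. Otherwise the right
   premise \<box>\<Pi> \<Rightarrow> A is interpolated with \<Lambda>1 enlarged by A; the resulting hypothesis
   \<box>(A \<rightarrow> \<box>A) is then discharged by the Grz rule, and \<diamond>I interpolates the conclusion.
   The induction is lexicographic: first on the number of subformulas of the root sequent not
   yet in \<Lambda>1 or \<Lambda>2, and then, for fixed \<Lambda>1, \<Lambda>2, along the edges of the tree other than those
   into right premises of (\<box>), which are well-founded because every infinite branch passes
   through infinitely many of them. *)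

section \<open>Derivability in Grz\<close>

lemma peval_derived_connectives [simp]:
  "peval v (Neg A) \<longleftrightarrow> \<not> peval v A" "peval v Top"
  "peval v (And A B) \<longleftrightarrow> peval v A \<and> peval v B" "peval v (Or A B) \<longleftrightarrow> peval v A \<or> peval v B"
  "peval v (Dia A) \<longleftrightarrow> \<not> v (Box (Neg A))"
  by (auto simp: Neg_def Top_def And_def Or_def Dia_def)

lemma peval_conj [simp]: "peval v (conj xs) \<longleftrightarrow> (\<forall>x\<in>set xs. peval v x)"
  by (induction xs) auto

lemma peval_disj [simp]: "peval v (disj ys) \<longleftrightarrow> (\<exists>y\<in>set ys. peval v y)"
  by (induction ys) auto

lemma Grz_tautological_consequence:
  assumes "\<forall>A\<in>set Fs. Grz A" and "\<And>v. \<forall>A\<in>set Fs. peval v A \<Longrightarrow> peval v C"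
  shows "Grz C"
  using assms
proof (induction Fs arbitrary: C)
  case Nil
  then show ?case by (auto intro: Grz.taut simp: taut_def)
next
  case (Cons F Fs)
  have "Grz (Imp F C)" using Cons.prems by (intro Cons.IH) auto
  then show ?case using Cons.prems Grz.mp by auto
qed

lemma Grz_Top: "Grz Top"
  by (auto intro: Grz.taut simp: taut_def)

(* Unlike conj, a right-nested implication distributes over \<box> by repeated use of K. *)
fun imps :: "'a fm list \<Rightarrow> 'a fm \<Rightarrow> 'a fm" where
  "imps [] C = C"
| "imps (X # Xs) C = Imp X (imps Xs C)"

lemma peval_imps [simp]: "peval v (imps Xs C) \<longleftrightarrow> ((\<forall>x\<in>set Xs. peval v x) \<longrightarrow> peval v C)"
  by (induction Xs) auto

lemma Grz_Box_imps: "Grz (Imp (Box (imps Xs C)) (imps (map Box Xs) (Box C)))"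
proof (induction Xs)
  case Nil
  then show ?case by (auto intro: Grz.taut simp: taut_def)
next
  case (Cons X Xs)
  show ?case
    by (rule Grz_tautological_consequence[of
          "[Imp (Box (Imp X (imps Xs C))) (Imp (Box X) (Box (imps Xs C))),
            Imp (Box (imps Xs C)) (imps (map Box Xs) (Box C))]"])
       (auto intro: Grz.K Cons.IH)
qed

lemma Grz_imps_Box:
  assumes "Grz (imps Xs C)" and "set Xs \<subseteq> range Box"
  shows "Grz (imps Xs (Box C))"
proof (rule Grz_tautological_consequence[of
      "imps (map Box Xs) (Box C) # map (\<lambda>x. Imp x (Box x)) Xs"])
  have "Grz (imps (map Box Xs) (Box C))"
    using Grz.mp[OF Grz_Box_imps Grz.nec[OF assms(1)]] .
  moreover have "Grz (Imp x (Box x))" if "x \<in> set Xs" for x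
    using that assms(2) Grz.four by blast
  ultimately show "\<forall>A\<in>set (imps (map Box Xs) (Box C) # map (\<lambda>x. Imp x (Box x)) Xs). Grz A"
    by auto
qed auto

definition sat_seq :: "('a fm \<Rightarrow> bool) \<Rightarrow> 'a fm set \<Rightarrow> 'a fm set \<Rightarrow> bool" where
  "sat_seq v X Y \<longleftrightarrow> (\<forall>x\<in>X. peval v x) \<longrightarrow> (\<exists>y\<in>Y. peval v y)"

(* Finiteness is part of the definition, so that derivability of a sequent is never vacuous. *)
definition Grz_derives :: "'a fm set \<Rightarrow> 'a fm set \<Rightarrow> bool" where
  "Grz_derives X Y \<longleftrightarrow> finite X \<and> finite Y \<and>
     (\<forall>xs ys. set xs = X \<longrightarrow> set ys = Y \<longrightarrow> Grz (Imp (conj xs) (disj ys)))"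

lemma Grz_derives_tautological_consequence:
  assumes "finite X" "finite Y" and "\<forall>(X', Y')\<in>set Ss. Grz_derives X' Y'"
    and "\<And>v. \<forall>(X', Y')\<in>set Ss. sat_seq v X' Y' \<Longrightarrow> sat_seq v X Y"
  shows "Grz_derives X Y"
proof -
  define fm_of :: "'a fm set \<times> 'a fm set \<Rightarrow> 'a fm" where
    "fm_of S = Imp (conj (SOME xs. set xs = fst S)) (disj (SOME ys. set ys = snd S))" for S
  have fm_of: "Grz (fm_of (X', Y')) \<and> (\<forall>v. peval v (fm_of (X', Y')) \<longleftrightarrow> sat_seq v X' Y')"
    if "(X', Y') \<in> set Ss" for X' Y'
  proof -
    have "Grz_derives X' Y'" using that assms(3) by auto
    moreover from this have "set (SOME xs. set xs = X') = X'" "set (SOME ys. set ys = Y') = Y'"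
      unfolding Grz_derives_def by (metis (mono_tags) finite_list someI_ex)+
    ultimately show ?thesis by (simp add: fm_of_def Grz_derives_def sat_seq_def)
  qed
  have "Grz (Imp (conj xs) (disj ys))" if "set xs = X" "set ys = Y" for xs ys
  proof (rule Grz_tautological_consequence[of "map fm_of Ss"])
    show "\<forall>A\<in>set (map fm_of Ss). Grz A" using fm_of by auto
    fix v assume "\<forall>A\<in>set (map fm_of Ss). peval v A"
    then have "\<forall>(X', Y')\<in>set Ss. sat_seq v X' Y'" using fm_of by fastforce
    then show "peval v (Imp (conj xs) (disj ys))"
      using assms(4) that by (simp add: sat_seq_def)
  qed
  with assms(1,2) show ?thesis
    unfolding Grz_derives_def by blast
qed

lemma Grz_derives_finite: "Grz_derives X Y \<Longrightarrow> finite X \<and> finite Y"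
  by (simp add: Grz_derives_def)

lemma Grz_derivesD: "Grz_derives X Y \<Longrightarrow> set xs = X \<Longrightarrow> set ys = Y \<Longrightarrow> Grz (Imp (conj xs) (disj ys))"
  unfolding Grz_derives_def by blast

lemma Grz_derives_valid: "finite X \<Longrightarrow> finite Y \<Longrightarrow> (\<And>v. sat_seq v X Y) \<Longrightarrow> Grz_derives X Y"
  by (rule Grz_derives_tautological_consequence[of _ _ "[]"]) auto

lemma Grz_derives_consequence:
  "Grz_derives X' Y' \<Longrightarrow> finite X \<Longrightarrow> finite Y \<Longrightarrow> (\<And>v. sat_seq v X' Y' \<Longrightarrow> sat_seq v X Y) \<Longrightarrow>
   Grz_derives X Y"
  by (rule Grz_derives_tautological_consequence[of _ _ "[(X', Y')]"]) auto

lemma Grz_derives_consequence2: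
  "Grz_derives X' Y' \<Longrightarrow> Grz_derives X'' Y'' \<Longrightarrow> finite X \<Longrightarrow> finite Y \<Longrightarrow>
   (\<And>v. sat_seq v X' Y' \<Longrightarrow> sat_seq v X'' Y'' \<Longrightarrow> sat_seq v X Y) \<Longrightarrow> Grz_derives X Y"
  by (rule Grz_derives_tautological_consequence[of _ _ "[(X', Y'), (X'', Y'')]"]) auto

lemma Grz_derives_theorem: "Grz A \<Longrightarrow> Grz_derives {} {A}"
  by (auto simp: Grz_derives_def intro: Grz_tautological_consequence[of "[A]"])

lemma Grz_derives_Box:
  assumes "X \<subseteq> range Box" and "Grz_derives X {C}"
  shows "Grz_derives X {Box C}"
proof -
  obtain xs where xs: "set xs = X"
    using assms(2) finite_list by (auto dest: Grz_derives_finite)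
  have "Grz (Imp (conj xs) (disj [C]))"
    using assms(2) xs by (rule Grz_derivesD) simp
  then have "Grz (imps xs C)"
    by (intro Grz_tautological_consequence[of "[Imp (conj xs) (disj [C])]"]) auto
  then have "Grz (imps xs (Box C))"
    using Grz_imps_Box assms(1) xs by blast
  then show ?thesis
    by (rule Grz_derives_consequence[OF Grz_derives_theorem])
       (use assms(2) xs in \<open>auto simp: sat_seq_def dest: Grz_derives_finite\<close>)
qed

lemma Grz_derives_Grz_rule:
  assumes "X \<subseteq> range Box" and "Grz_derives (insert (Box (Imp A (Box A))) X) {A}"
  shows "Grz_derives X {Box A}"
proof -
  have "Grz_derives X {Imp (Box (Imp A (Box A))) A}"
    by (rule Grz_derives_consequence[OF assms(2)])
       (use assms(2) in \<open>auto simp: sat_seq_def dest: Grz_derives_finite\<close>)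
  then have "Grz_derives X {Box (Imp (Box (Imp A (Box A))) A)}"
    using Grz_derives_Box assms(1) by blast
  then show ?thesis
    by (rule Grz_derives_consequence2[OF _ Grz_derives_theorem[OF Grz.grz]])
       (use assms(2) in \<open>auto simp: sat_seq_def dest: Grz_derives_finite\<close>)
qed

lemma Grz_derives_Box_Dia:
  assumes "X \<subseteq> range Box" and "Grz_derives (insert (Box (Imp A (Box A))) X) {A, I}"
  shows "Grz_derives X {Box A, Dia I}"
proof -
  have "insert (Box (Neg I)) X \<subseteq> range Box" using assms(1) by auto
  moreover have "Grz_derives (insert (Box (Imp A (Box A))) (insert (Box (Neg I)) X)) {A}"
    by (rule Grz_derives_consequence2[OF assms(2) Grz_derives_theorem[OF Grz.T[of "Neg I"]]])
       (use assms(2) in \<open>auto simp: sat_seq_def dest: Grz_derives_finite\<close>)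
  ultimately have "Grz_derives (insert (Box (Neg I)) X) {Box A}"
    by (rule Grz_derives_Grz_rule)
  then show ?thesis
    by (rule Grz_derives_consequence)
       (use assms(2) in \<open>auto simp: sat_seq_def dest: Grz_derives_finite\<close>)
qed

lemma Grz_derives_Box_Neg:
  assumes "X \<subseteq> range Box" and "Grz_derives (insert I X) {}"
  shows "Grz_derives X {Box (Neg I)}"
proof -
  have "Grz_derives X {Neg I}"
    by (rule Grz_derives_consequence[OF assms(2)])
       (use assms(2) in \<open>auto simp: sat_seq_def dest: Grz_derives_finite\<close>)
  with assms(1) show ?thesis by (rule Grz_derives_Box)
qed

section \<open>Interpolants\<close>

lemma pos_ms_simps [simp]:
  "pos_ms {#} = {}" "pos_ms (add_mset A M) = pos A \<union> pos_ms M"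
  "pos_ms (M + N) = pos_ms M \<union> pos_ms N"
  by (auto simp: pos_ms_def)

lemma neg_ms_simps [simp]:
  "neg_ms {#} = {}" "neg_ms (add_mset A M) = neg A \<union> neg_ms M"
  "neg_ms (M + N) = neg_ms M \<union> neg_ms N"
  by (auto simp: neg_ms_def)

lemma pos_ms_mono: "M \<subseteq># N \<Longrightarrow> pos_ms M \<subseteq> pos_ms N"
  by (auto simp: pos_ms_def dest: mset_subset_eqD)

lemma neg_ms_mono: "M \<subseteq># N \<Longrightarrow> neg_ms M \<subseteq> neg_ms N"
  by (auto simp: neg_ms_def dest: mset_subset_eqD)

lemma pos_neg_derived_connectives [simp]:
  "pos (Neg A) = neg A" "neg (Neg A) = pos A" "pos Top = {}" "neg Top = {}"
  "pos (And A B) = pos A \<union> pos B" "neg (And A B) = neg A \<union> neg B"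
  "pos (Or A B) = pos A \<union> pos B" "neg (Or A B) = neg A \<union> neg B"
  "pos (Dia A) = pos A" "neg (Dia A) = neg A"
  by (auto simp: Neg_def Top_def And_def Or_def Dia_def)

lemma finite_star [simp]: "finite (star L) \<longleftrightarrow> finite L"
proof -
  have "star L = (\<lambda>A. Box (Imp A (Box A))) ` L" by (auto simp: star_def)
  moreover have "inj_on (\<lambda>A. Box (Imp A (Box A))) L" by (rule inj_onI) simp
  ultimately show ?thesis by (simp add: finite_image_iff)
qed

lemma star_subset_range_Box: "star L \<subseteq> range Box"
  by (auto simp: star_def)

lemma star_insert: "star (insert A L) = insert (Box (Imp A (Box A))) (star L)"
  by (auto simp: star_def)

definition interpolant :: "'a fm set \<Rightarrow> 'a fm set \<Rightarrow> 'a sequent \<Rightarrow> 'a sequent \<Rightarrow> 'a fm \<Rightarrow> bool" where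
  "interpolant L1 L2 S1 S2 I \<longleftrightarrow>
     pos I \<subseteq> neg_seq S1 \<inter> pos_seq S2 \<and> neg I \<subseteq> pos_seq S1 \<inter> neg_seq S2 \<and>
     Grz_derives (star L1 \<union> set_mset (fst S1)) (set_mset (snd S1) \<union> {I}) \<and>
     Grz_derives (star L2 \<union> {I} \<union> set_mset (fst S2)) (set_mset (snd S2))"

definition has_interpolant :: "'a fm set \<Rightarrow> 'a fm set \<Rightarrow> 'a sequent \<Rightarrow> 'a sequent \<Rightarrow> bool" where
  "has_interpolant L1 L2 S1 S2 \<longleftrightarrow> (\<exists>I. interpolant L1 L2 S1 S2 I)"

(* Swapping the components turns I into \<not>I, so every rule needs to be treated only with its
   principal formula in the first component. *)
lemma interpolant_swap:
  assumes "interpolant L1 L2 S1 S2 I"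
  shows "interpolant L2 L1 S2 S1 (Neg I)"
proof -
  have S1: "Grz_derives (star L1 \<union> set_mset (fst S1)) (set_mset (snd S1) \<union> {I})"
    and S2: "Grz_derives (star L2 \<union> {I} \<union> set_mset (fst S2)) (set_mset (snd S2))"
    using assms unfolding interpolant_def by auto
  have "Grz_derives (star L2 \<union> set_mset (fst S2)) (set_mset (snd S2) \<union> {Neg I})"
    by (rule Grz_derives_consequence[OF S2])
       (use S2 in \<open>auto simp: sat_seq_def dest: Grz_derives_finite\<close>)
  moreover have "Grz_derives (star L1 \<union> {Neg I} \<union> set_mset (fst S1)) (set_mset (snd S1))"
    by (rule Grz_derives_consequence[OF S1])
       (use S1 in \<open>auto simp: sat_seq_def dest: Grz_derives_finite\<close>)
  ultimately show ?thesis using assms unfolding interpolant_def by auto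
qed

lemma has_interpolant_swap: "has_interpolant L1 L2 S1 S2 \<longleftrightarrow> has_interpolant L2 L1 S2 S1"
  unfolding has_interpolant_def by (blast intro: interpolant_swap)

lemma has_interpolant_transfer:
  assumes "has_interpolant L1 L2 (G', D') S2"
    and "pos_seq (G', D') \<subseteq> pos_seq (G, D)" "neg_seq (G', D') \<subseteq> neg_seq (G, D)"
    and "Grz F"
    and "\<And>v I. sat_seq v (star L1 \<union> set_mset G') (set_mset D' \<union> {I}) \<Longrightarrow> peval v F \<Longrightarrow>
           sat_seq v (star L1 \<union> set_mset G) (set_mset D \<union> {I})"
  shows "has_interpolant L1 L2 (G, D) S2"
proof -
  obtain I where I: "interpolant L1 L2 (G', D') S2 I"
    using assms(1) unfolding has_interpolant_def by blast
  then have left: "Grz_derives (star L1 \<union> set_mset G') (set_mset D' \<union> {I})"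
    by (simp add: interpolant_def)
  have "Grz_derives (star L1 \<union> set_mset G) (set_mset D \<union> {I})"
    by (rule Grz_derives_consequence2[OF left Grz_derives_theorem[OF assms(4)]])
       (use left assms(5) in \<open>auto simp: sat_seq_def dest: Grz_derives_finite\<close>)
  with I assms(2,3) have "interpolant L1 L2 (G, D) S2 I"
    unfolding interpolant_def by auto
  then show ?thesis unfolding has_interpolant_def by blast
qed

lemma has_interpolant_axiom:
  assumes "finite L1" "finite L2" and "(At p \<in># G1 \<and> At p \<in># D1 + D2) \<or> Bot \<in># G1"
  shows "has_interpolant L1 L2 (G1, D1) (G2, D2)"
proof -
  consider "Bot \<in># G1 \<or> (At p \<in># G1 \<and> At p \<in># D1)" | "At p \<in># G1" "At p \<in># D2"
    using assms(3) by auto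
  then show ?thesis
  proof cases
    case 1
    then have "interpolant L1 L2 (G1, D1) (G2, D2) Bot"
      using assms(1,2) unfolding interpolant_def
      by (force intro!: Grz_derives_valid simp: sat_seq_def)
    then show ?thesis unfolding has_interpolant_def by blast
  next
    case 2
    then have "interpolant L1 L2 (G1, D1) (G2, D2) (At p)"
      using assms(1,2) unfolding interpolant_def
      by (force intro!: Grz_derives_valid simp: sat_seq_def pos_seq_def neg_seq_def pos_ms_def)
    then show ?thesis unfolding has_interpolant_def by blast
  qed
qed

lemma has_interpolant_ImpL:
  assumes "has_interpolant L1 L2 (add_mset B G, D) S2"
    and "has_interpolant L1 L2 (G, add_mset A D) S2"
  shows "has_interpolant L1 L2 (add_mset (Imp A B) G, D) S2"
proof -
  obtain I0 I1 where I0: "interpolant L1 L2 (add_mset B G, D) S2 I0"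
    and I1: "interpolant L1 L2 (G, add_mset A D) S2 I1"
    using assms unfolding has_interpolant_def by blast
  have left0: "Grz_derives (star L1 \<union> set_mset (add_mset B G)) (set_mset D \<union> {I0})"
    and right0: "Grz_derives (star L2 \<union> {I0} \<union> set_mset (fst S2)) (set_mset (snd S2))"
    using I0 by (simp_all add: interpolant_def)
  have left1: "Grz_derives (star L1 \<union> set_mset G) (set_mset (add_mset A D) \<union> {I1})"
    and right1: "Grz_derives (star L2 \<union> {I1} \<union> set_mset (fst S2)) (set_mset (snd S2))"
    using I1 by (simp_all add: interpolant_def)
  have "Grz_derives (star L1 \<union> set_mset (add_mset (Imp A B) G)) (set_mset D \<union> {Or I0 I1})"
    by (rule Grz_derives_consequence2[OF left0 left1])
       (use left0 in \<open>auto simp: sat_seq_def dest: Grz_derives_finite\<close>)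
  moreover have "Grz_derives (star L2 \<union> {Or I0 I1} \<union> set_mset (fst S2)) (set_mset (snd S2))"
    by (rule Grz_derives_consequence2[OF right0 right1])
       (use right0 in \<open>auto simp: sat_seq_def dest: Grz_derives_finite\<close>)
  ultimately have "interpolant L1 L2 (add_mset (Imp A B) G, D) S2 (Or I0 I1)"
    using I0 I1 unfolding interpolant_def by (auto simp: pos_seq_def neg_seq_def)
  then show ?thesis unfolding has_interpolant_def by blast
qed

lemma has_interpolant_ImpR:
  "has_interpolant L1 L2 (add_mset A G, add_mset B D) S2 \<Longrightarrow>
   has_interpolant L1 L2 (G, add_mset (Imp A B) D) S2"
  by (erule has_interpolant_transfer[OF _ _ _ Grz_Top])
     (auto simp: pos_seq_def neg_seq_def sat_seq_def)

lemma has_interpolant_refl: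
  "has_interpolant L1 L2 (add_mset B (add_mset (Box B) G), D) S2 \<Longrightarrow>
   has_interpolant L1 L2 (add_mset (Box B) G, D) S2"
  by (erule has_interpolant_transfer[OF _ _ _ Grz.T])
     (auto simp: pos_seq_def neg_seq_def sat_seq_def)

lemma has_interpolant_Box_star:
  assumes "A \<in> L1" and "has_interpolant L1 L2 (G, add_mset A D) S2"
  shows "has_interpolant L1 L2 (G, add_mset (Box A) D) S2"
proof (rule has_interpolant_transfer[OF assms(2) _ _ Grz.T[of "Imp A (Box A)"]])
  have in_star: "Box (Imp A (Box A)) \<in> star L1" using assms(1) by (auto simp: star_def)
  show "sat_seq v (star L1 \<union> set_mset G) (set_mset (add_mset (Box A) D) \<union> {I})"
    if "sat_seq v (star L1 \<union> set_mset G) (set_mset (add_mset A D) \<union> {I})"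
      and "peval v (Imp (Box (Imp A (Box A))) (Imp A (Box A)))" for v I
    unfolding sat_seq_def
  proof
    assume all: "\<forall>x\<in>star L1 \<union> set_mset G. peval v x"
    with in_star have "v (Box (Imp A (Box A)))" by force
    with that(2) have "peval v A \<longrightarrow> v (Box A)" by simp
    with that(1) all show "\<exists>y\<in>set_mset (add_mset (Box A) D) \<union> {I}. peval v y"
      by (auto simp: sat_seq_def)
  qed
qed (auto simp: pos_seq_def neg_seq_def)

lemma has_interpolant_Box:
  assumes "has_interpolant (insert A L1) L2 (B1, {#A#}) (B2, {#})"
    and "set_mset B1 \<subseteq> range Box" "set_mset B2 \<subseteq> range Box"
    and "B1 \<subseteq># G1" "B2 \<subseteq># G2" "Box A \<in># D1"
  shows "has_interpolant L1 L2 (G1, D1) (G2, D2)"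
proof -
  obtain I where I: "interpolant (insert A L1) L2 (B1, {#A#}) (B2, {#}) I"
    using assms(1) unfolding has_interpolant_def by blast
  have left: "Grz_derives (insert (Box (Imp A (Box A))) (star L1 \<union> set_mset B1)) {A, I}"
    and right: "Grz_derives (insert I (star L2 \<union> set_mset B2)) {}"
    using I by (simp_all add: interpolant_def star_insert insert_commute)
  have "Grz_derives (star L1 \<union> set_mset B1) {Box A, Dia I}"
    using assms(2) star_subset_range_Box left by (intro Grz_derives_Box_Dia) auto
  then have "Grz_derives (star L1 \<union> set_mset G1) (set_mset D1 \<union> {Dia I})"
    by (rule Grz_derives_consequence)
       (use left assms(4,6) in
         \<open>fastforce simp: sat_seq_def dest: Grz_derives_finite mset_subset_eqD\<close>)+
  moreover have "Grz_derives (star L2 \<union> set_mset B2) {Box (Neg I)}"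
    using assms(3) star_subset_range_Box right by (intro Grz_derives_Box_Neg) auto
  then have "Grz_derives (star L2 \<union> {Dia I} \<union> set_mset G2) (set_mset D2)"
    by (rule Grz_derives_consequence)
       (use right assms(5) in \<open>auto simp: sat_seq_def dest: Grz_derives_finite mset_subset_eqD\<close>)
  moreover have "pos A \<subseteq> pos_ms D1" "neg A \<subseteq> neg_ms D1"
    using assms(6) UN_upper[of "Box A" "set_mset D1" pos] UN_upper[of "Box A" "set_mset D1" neg]
    by (simp_all add: pos_ms_def neg_ms_def)
  then have "pos_seq (B1, {#A#}) \<subseteq> pos_seq (G1, D1)" "neg_seq (B1, {#A#}) \<subseteq> neg_seq (G1, D1)"
    "pos_seq (B2, {#}) \<subseteq> pos_seq (G2, D2)" "neg_seq (B2, {#}) \<subseteq> neg_seq (G2, D2)"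
    using pos_ms_mono[OF assms(4)] neg_ms_mono[OF assms(4)]
      pos_ms_mono[OF assms(5)] neg_ms_mono[OF assms(5)]
    by (auto simp: pos_seq_def neg_seq_def)
  ultimately have "interpolant L1 L2 (G1, D1) (G2, D2) (Dia I)"
    using I unfolding interpolant_def by auto
  then show ?thesis unfolding has_interpolant_def by blast
qed

section \<open>Splittings of the conclusions of rules\<close>

lemma add_mset_eq_plus_cases:
  assumes "add_mset X M = M1 + M2"
  obtains (left) M1' where "M1 = add_mset X M1'" "M = M1' + M2"
    | (right) M2' where "M2 = add_mset X M2'" "M = M1 + M2'"
proof -
  have "X \<in># M1 + M2" by (simp flip: assms)
  then consider "X \<in># M1" | "X \<in># M2" by auto
  then show ?thesis
  proof cases
    case 1
    then obtain M1' where M1: "M1 = add_mset X M1'" by (metis mset_add)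
    with assms have "M = M1' + M2" by simp
    with M1 show ?thesis by (rule left)
  next
    case 2
    then obtain M2' where M2: "M2 = add_mset X M2'" by (metis mset_add)
    with assms have "M = M1 + M2'" by simp
    with M2 show ?thesis by (rule right)
  qed
qed

lemma mset_subset_eq_plus_split:
  assumes "B \<subseteq># G1 + G2"
  obtains B1 B2 where "B = B1 + B2" "B1 \<subseteq># G1" "B2 \<subseteq># G2"
proof
  show "B = B \<inter># G1 + (B - G1)" by (simp add: multiset_eq_iff min_def)
  show "B \<inter># G1 \<subseteq># G1" by simp
  show "B - G1 \<subseteq># G2"
    unfolding subseteq_mset_def
  proof
    fix a
    show "count (B - G1) a \<le> count G2 a"
      using assms[unfolded subseteq_mset_def, rule_format, of a] by simp
  qed
qed

definition split_interpolable :: "'a fm set \<Rightarrow> 'a fm set \<Rightarrow> 'a sequent \<Rightarrow> bool" where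
  "split_interpolable L1 L2 S \<longleftrightarrow>
     (\<forall>G1 G2 D1 D2. S = (G1 + G2, D1 + D2) \<longrightarrow> has_interpolant L1 L2 (G1, D1) (G2, D2))"

lemma split_interpolableI:
  assumes "\<And>G1 G2 D1 D2. S = (G1 + G2, D1 + D2) \<Longrightarrow>
    has_interpolant L1 L2 (G1, D1) (G2, D2) \<or> has_interpolant L2 L1 (G2, D2) (G1, D1)"
  shows "split_interpolable L1 L2 S"
  unfolding split_interpolable_def
proof (intro allI impI)
  fix G1 G2 D1 D2 assume "S = (G1 + G2, D1 + D2)"
  then have "has_interpolant L1 L2 (G1, D1) (G2, D2) \<or> has_interpolant L2 L1 (G2, D2) (G1, D1)"
    by (rule assms)
  then show "has_interpolant L1 L2 (G1, D1) (G2, D2)"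
    using has_interpolant_swap by blast
qed

lemma split_interpolableD:
  "split_interpolable L1 L2 S \<Longrightarrow> S = (G1 + G2, D1 + D2) \<Longrightarrow> has_interpolant L1 L2 (G1, D1) (G2, D2)"
  unfolding split_interpolable_def by blast

lemma split_interpolable_swap:
  assumes "split_interpolable L1 L2 S"
  shows "split_interpolable L2 L1 S"
proof (rule split_interpolableI)
  fix G1 G2 D1 D2 assume "S = (G1 + G2, D1 + D2)"
  then have "S = (G2 + G1, D2 + D1)" by (simp add: add.commute)
  then show "has_interpolant L2 L1 (G1, D1) (G2, D2) \<or> has_interpolant L1 L2 (G2, D2) (G1, D1)"
    by (intro disjI2 split_interpolableD[OF assms])
qed

lemma split_interpolable_axiom:
  assumes "finite L1" "finite L2" and "(At p \<in># G \<and> At p \<in># D) \<or> Bot \<in># G"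
  shows "split_interpolable L1 L2 (G, D)"
proof (rule split_interpolableI)
  fix G1 G2 D1 D2 assume "(G, D) = (G1 + G2, D1 + D2)"
  then consider "(At p \<in># G1 \<and> At p \<in># D1 + D2) \<or> Bot \<in># G1"
    | "(At p \<in># G2 \<and> At p \<in># D2 + D1) \<or> Bot \<in># G2"
    using assms(3) by auto
  then show "has_interpolant L1 L2 (G1, D1) (G2, D2) \<or> has_interpolant L2 L1 (G2, D2) (G1, D1)"
    by cases (simp_all add: has_interpolant_axiom assms(1,2))
qed

lemma split_interpolable_ImpL:
  assumes "split_interpolable L1 L2 (add_mset B G, D)"
    and "split_interpolable L1 L2 (G, add_mset A D)"
  shows "split_interpolable L1 L2 (add_mset (Imp A B) G, D)"
proof (rule split_interpolableI)
  fix G1 G2 D1 D2 assume "(add_mset (Imp A B) G, D) = (G1 + G2, D1 + D2)"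
  then have G: "add_mset (Imp A B) G = G1 + G2" and D: "D = D1 + D2" by simp_all
  from G show "has_interpolant L1 L2 (G1, D1) (G2, D2) \<or> has_interpolant L2 L1 (G2, D2) (G1, D1)"
  proof (cases rule: add_mset_eq_plus_cases)
    case (left G1')
    have "has_interpolant L1 L2 (add_mset B G1', D1) (G2, D2)"
      by (rule split_interpolableD[OF assms(1)]) (simp add: left D)
    moreover have "has_interpolant L1 L2 (G1', add_mset A D1) (G2, D2)"
      by (rule split_interpolableD[OF assms(2)]) (simp add: left D)
    ultimately show ?thesis by (simp add: left(1) has_interpolant_ImpL)
  next
    case (right G2')
    have "has_interpolant L2 L1 (add_mset B G2', D2) (G1, D1)"
      by (rule split_interpolableD[OF split_interpolable_swap[OF assms(1)]])
         (simp add: right D add.commute)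
    moreover have "has_interpolant L2 L1 (G2', add_mset A D2) (G1, D1)"
      by (rule split_interpolableD[OF split_interpolable_swap[OF assms(2)]])
         (simp add: right D add.commute)
    ultimately show ?thesis by (simp add: right(1) has_interpolant_ImpL)
  qed
qed

lemma split_interpolable_ImpR:
  assumes "split_interpolable L1 L2 (add_mset A G, add_mset B D)"
  shows "split_interpolable L1 L2 (G, add_mset (Imp A B) D)"
proof (rule split_interpolableI)
  fix G1 G2 D1 D2 assume "(G, add_mset (Imp A B) D) = (G1 + G2, D1 + D2)"
  then have G: "G = G1 + G2" and D: "add_mset (Imp A B) D = D1 + D2" by simp_all
  from D show "has_interpolant L1 L2 (G1, D1) (G2, D2) \<or> has_interpolant L2 L1 (G2, D2) (G1, D1)"
  proof (cases rule: add_mset_eq_plus_cases)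
    case (left D1')
    have "has_interpolant L1 L2 (add_mset A G1, add_mset B D1') (G2, D2)"
      by (rule split_interpolableD[OF assms]) (simp add: left G)
    then show ?thesis by (simp add: left(1) has_interpolant_ImpR)
  next
    case (right D2')
    have "has_interpolant L2 L1 (add_mset A G2, add_mset B D2') (G1, D1)"
      by (rule split_interpolableD[OF split_interpolable_swap[OF assms]])
         (simp add: right G add.commute)
    then show ?thesis by (simp add: right(1) has_interpolant_ImpR)
  qed
qed

lemma split_interpolable_refl:
  assumes "split_interpolable L1 L2 (add_mset B (add_mset (Box B) G), D)"
  shows "split_interpolable L1 L2 (add_mset (Box B) G, D)"
proof (rule split_interpolableI)
  fix G1 G2 D1 D2 assume "(add_mset (Box B) G, D) = (G1 + G2, D1 + D2)"
  then have G: "add_mset (Box B) G = G1 + G2" and D: "D = D1 + D2" by simp_all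
  from G show "has_interpolant L1 L2 (G1, D1) (G2, D2) \<or> has_interpolant L2 L1 (G2, D2) (G1, D1)"
  proof (cases rule: add_mset_eq_plus_cases)
    case (left G1')
    have "has_interpolant L1 L2 (add_mset B (add_mset (Box B) G1'), D1) (G2, D2)"
      by (rule split_interpolableD[OF assms]) (simp add: left D)
    then show ?thesis by (simp add: left(1) has_interpolant_refl)
  next
    case (right G2')
    have "has_interpolant L2 L1 (add_mset B (add_mset (Box B) G2'), D2) (G1, D1)"
      by (rule split_interpolableD[OF split_interpolable_swap[OF assms]])
         (simp add: right D add.commute)
    then show ?thesis by (simp add: right(1) has_interpolant_refl)
  qed
qed

lemma has_interpolant_BoxR_first:
  assumes "split_interpolable L1 L2 (G + image_mset Box P, add_mset A D)"
    and "A \<notin> L1 \<Longrightarrow> split_interpolable (insert A L1) L2 (image_mset Box P, {#A#})"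
    and "G + image_mset Box P = G1 + G2" "D = D1 + D2"
  shows "has_interpolant L1 L2 (G1, add_mset (Box A) D1) (G2, D2)"
proof (cases "A \<in> L1")
  case True
  have "has_interpolant L1 L2 (G1, add_mset A D1) (G2, D2)"
    by (rule split_interpolableD[OF assms(1)]) (simp add: assms(3,4))
  with True show ?thesis by (rule has_interpolant_Box_star)
next
  case False
  have "image_mset Box P \<subseteq># G1 + G2" using assms(3) by (metis mset_subset_eq_add_right)
  then obtain B1 B2 where B: "image_mset Box P = B1 + B2" "B1 \<subseteq># G1" "B2 \<subseteq># G2"
    by (rule mset_subset_eq_plus_split)
  have "set_mset (B1 + B2) \<subseteq> range Box" by (auto simp flip: B(1))
  then have boxed: "set_mset B1 \<subseteq> range Box" "set_mset B2 \<subseteq> range Box" by auto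
  have "has_interpolant (insert A L1) L2 (B1, {#A#}) (B2, {#})"
    by (rule split_interpolableD[OF assms(2)[OF False]]) (simp add: B)
  from has_interpolant_Box[OF this boxed B(2,3)] show ?thesis by simp
qed

lemma split_interpolable_BoxR:
  assumes "split_interpolable L1 L2 (G + image_mset Box P, add_mset A D)"
    and "A \<notin> L1 \<Longrightarrow> split_interpolable (insert A L1) L2 (image_mset Box P, {#A#})"
    and "A \<notin> L2 \<Longrightarrow> split_interpolable L1 (insert A L2) (image_mset Box P, {#A#})"
  shows "split_interpolable L1 L2 (G + image_mset Box P, add_mset (Box A) D)"
proof (rule split_interpolableI)
  fix G1 G2 D1 D2 assume "(G + image_mset Box P, add_mset (Box A) D) = (G1 + G2, D1 + D2)"
  then have G: "G + image_mset Box P = G1 + G2" and D: "add_mset (Box A) D = D1 + D2" by simp_all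
  from D show "has_interpolant L1 L2 (G1, D1) (G2, D2) \<or> has_interpolant L2 L1 (G2, D2) (G1, D1)"
  proof (cases rule: add_mset_eq_plus_cases)
    case (left D1')
    have "has_interpolant L1 L2 (G1, add_mset (Box A) D1') (G2, D2)"
      using assms(1,2) G left(2) by (rule has_interpolant_BoxR_first)
    then show ?thesis by (simp add: left(1))
  next
    case (right D2')
    have "G + image_mset Box P = G2 + G1" "D = D2' + D1"
      using G right(2) by (simp_all add: add.commute)
    then have "has_interpolant L2 L1 (G2, add_mset (Box A) D2') (G1, D1)"
      using split_interpolable_swap[OF assms(1)] split_interpolable_swap[OF assms(3)]
      by (intro has_interpolant_BoxR_first)
    then show ?thesis by (simp add: right(1))
  qed
qed

lemma split_interpolable_rule:
  assumes "finite L1" "finite L2" and "rule_ok r S ps"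
    and "\<And>i. i < length ps \<Longrightarrow> \<not> (r = BoxR \<and> i = 1) \<Longrightarrow> split_interpolable L1 L2 (ps ! i)"
    and "\<And>A. r = BoxR \<Longrightarrow> snd (ps ! 1) = {#A#} \<Longrightarrow> A \<notin> L1 \<Longrightarrow>
           split_interpolable (insert A L1) L2 (ps ! 1)"
    and "\<And>A. r = BoxR \<Longrightarrow> snd (ps ! 1) = {#A#} \<Longrightarrow> A \<notin> L2 \<Longrightarrow>
           split_interpolable L1 (insert A L2) (ps ! 1)"
  shows "split_interpolable L1 L2 S"
proof (cases r)
  case Ax
  with assms(3) obtain G D p where "S = (G, D)" "(At p \<in># G \<and> At p \<in># D) \<or> Bot \<in># G"
    by (cases S) auto
  then show ?thesis using split_interpolable_axiom[OF assms(1,2)] by simp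
next
  case ImpL
  with assms(3) obtain G D A B where "S = (add_mset (Imp A B) G, D)"
    and "ps = [(add_mset B G, D), (G, add_mset A D)]"
    by (cases S) auto
  then show ?thesis using assms(4)[of 0] assms(4)[of 1] ImpL by (simp add: split_interpolable_ImpL)
next
  case ImpR
  with assms(3) obtain G D A B where "S = (G, add_mset (Imp A B) D)"
    and "ps = [(add_mset A G, add_mset B D)]"
    by (cases S) auto
  then show ?thesis using assms(4)[of 0] ImpR by (simp add: split_interpolable_ImpR)
next
  case Refl
  with assms(3) obtain G D B where "S = (add_mset (Box B) G, D)"
    and "ps = [(add_mset B (add_mset (Box B) G), D)]"
    by (cases S) (auto simp: add_mset_commute)
  then show ?thesis using assms(4)[of 0] Refl by (simp add: split_interpolable_refl)
next
  case BoxR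
  with assms(3) obtain G P D A where "S = (G + image_mset Box P, add_mset (Box A) D)"
    and "ps = [(G + image_mset Box P, add_mset A D), (image_mset Box P, {#A#})]"
    by (cases S) auto
  then show ?thesis using assms(4)[of 0] assms(5,6) BoxR by (simp add: split_interpolable_BoxR)
qed

section \<open>Interpolation along an \<infinity>-proof\<close>

fun subfms :: "'a fm \<Rightarrow> 'a fm set" where
  "subfms Bot = {Bot}"
| "subfms (At p) = {At p}"
| "subfms (Imp A B) = insert (Imp A B) (subfms A \<union> subfms B)"
| "subfms (Box A) = insert (Box A) (subfms A)"

lemma subfms_refl [simp]: "A \<in> subfms A"
  by (cases A) auto

lemma subfms_trans: "B \<in> subfms A \<Longrightarrow> subfms B \<subseteq> subfms A"
  by (induction A) auto

lemma finite_subfms: "finite (subfms A)"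
  by (induction A) auto

definition seq_subfms :: "'a sequent \<Rightarrow> 'a fm set" where
  "seq_subfms S = (\<Union>A\<in>set_mset (fst S) \<union> set_mset (snd S). subfms A)"

lemma finite_seq_subfms: "finite (seq_subfms S)"
  by (simp add: seq_subfms_def finite_subfms)

lemma rule_ok_premise_subfms:
  assumes "rule_ok r S ps" and "Q \<in> set ps"
  shows "seq_subfms Q \<subseteq> seq_subfms S"
proof -
  obtain G D where S: "S = (G, D)" by fastforce
  have "\<exists>F'. (F' \<in># G \<or> F' \<in># D) \<and> F \<in> subfms F'" if "F \<in># fst Q \<or> F \<in># snd Q" for F
  proof (cases r)
    case Ax then show ?thesis using assms that by (simp add: S)
  next
    case ImpL then show ?thesis
      using assms that by (auto simp: S) (metis subfms.simps(3) subfms_refl UnCI insertCI)+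
  next
    case ImpR then show ?thesis
      using assms that by (auto simp: S) (metis subfms.simps(3) subfms_refl UnCI insertCI)+
  next
    case Refl then show ?thesis
      using assms that by (auto simp: S) (metis subfms.simps(4) subfms_refl insertCI)+
  next
    case BoxR then show ?thesis
      using assms that by (auto simp: S) (metis subfms.simps(4) subfms_refl insertCI imageI)+
  qed
  then show ?thesis
    using subfms_trans unfolding seq_subfms_def S by fastforce
qed

lemma card_Diff_insert_less:
  assumes "finite S" "A \<in> S" "A \<notin> L"
  shows "card (S - insert A L) < card (S - L)"
proof -
  have "card (S - L - {A}) < card (S - L)"
    using assms by (intro card_Diff1_less) auto
  then show ?thesis by (simp only: Diff_insert[of S A L])
qed

context
  fixes N :: "nat list set" and lab :: "nat list \<Rightarrow> 'a sequent" and rl :: "nat list \<Rightarrow> rule"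
  assumes tree: "inf_proof N lab rl"
begin

lemma root_in_tree: "[] \<in> N"
  using tree by (simp add: inf_proof_def)

lemma prefix_in_tree: "p @ q \<in> N \<Longrightarrow> p \<in> N"
proof (induction q rule: rev_induct)
  case (snoc i q)
  then show ?case using tree unfolding inf_proof_def by (metis append_assoc)
qed simp

lemma child_in_tree_iff: "p \<in> N \<Longrightarrow> p @ [i] \<in> N \<longleftrightarrow> i < arity (rl p)"
  using tree by (simp add: inf_proof_def)

lemma rule_ok_node: "p \<in> N \<Longrightarrow> rule_ok (rl p) (lab p) (map (\<lambda>i. lab (p @ [i])) [0..<arity (rl p)])"
  using tree by (simp add: inf_proof_def)

lemma seq_subfms_node: "p \<in> N \<Longrightarrow> seq_subfms (lab p) \<subseteq> seq_subfms (lab [])"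
proof (induction p rule: rev_induct)
  case (snoc i p)
  then have "p \<in> N" "i < arity (rl p)"
    using prefix_in_tree child_in_tree_iff by blast+
  then have "seq_subfms (lab (p @ [i])) \<subseteq> seq_subfms (lab p)"
    by (intro rule_ok_premise_subfms[OF rule_ok_node]) auto
  with snoc.IH \<open>p \<in> N\<close> show ?case by blast
qed simp

definition child_rel :: "(nat list \<times> nat list) set" where
  "child_rel = {(p @ [i], p) | p i. p @ [i] \<in> N \<and> \<not> (rl p = BoxR \<and> i = 1)}"

lemma wf_child_rel: "wf child_rel"
proof (rule ccontr)
  assume "\<not> wf child_rel"
  then obtain f where f: "\<And>n. (f (Suc n), f n) \<in> child_rel"
    using wf_iff_no_infinite_down_chain by blast
  \<comment> \<open>Prefixing the chain with the path from the root to f 0 gives an infinite branch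
      whose edges from position m on are never right premises of (\<box>).\<close>
  define m where "m = length (f 0)"
  define g where "g n = (if n \<le> m then take n (f 0) else f (n - m))" for n
  have f0: "f 0 \<in> N" using f[of 0] prefix_in_tree by (auto simp: child_rel_def)
  have g_late: "g n = f (n - m)" if "m \<le> n" for n
    using that by (cases "n = m") (auto simp: g_def m_def)
  have g_step: "g (Suc n) \<in> N \<and> (\<exists>i. g (Suc n) = g n @ [i])" for n
  proof (cases "n < m")
    case True
    then have "g (Suc n) = take n (f 0) @ [f 0 ! n]" "g n = take n (f 0)"
      by (simp_all add: g_def m_def take_Suc_conv_app_nth)
    moreover have "take (Suc n) (f 0) \<in> N"
      using f0 prefix_in_tree by (metis append_take_drop_id)
    ultimately show ?thesis using True by (simp add: g_def)
  next
    case False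
    then have "g (Suc n) = f (Suc (n - m))" "g n = f (n - m)"
      using g_late by (simp_all add: Suc_diff_le)
    then show ?thesis using f[of "n - m"] by (auto simp: child_rel_def)
  qed
  have "g 0 = []" by (simp add: g_def)
  with g_step have "infinite {n. rl (g n) = BoxR \<and> g (Suc n) = g n @ [1]}"
    using tree unfolding inf_proof_def by blast
  moreover have "{n. rl (g n) = BoxR \<and> g (Suc n) = g n @ [1]} \<subseteq> {..<m}"
  proof (rule subsetI, rule ccontr)
    fix n assume n: "n \<in> {n. rl (g n) = BoxR \<and> g (Suc n) = g n @ [1]}" and "n \<notin> {..<m}"
    then have "g (Suc n) = f (Suc (n - m))" "g n = f (n - m)"
      using g_late by (simp_all add: Suc_diff_le)
    then show False using f[of "n - m"] n by (auto simp: child_rel_def)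
  qed
  ultimately show False using finite_subset by blast
qed

lemma split_interpolable_node_from_extensions:
  assumes "finite L1" "finite L2"
    and "\<And>A q. A \<in> seq_subfms (lab []) \<Longrightarrow> A \<notin> L1 \<Longrightarrow> q \<in> N \<Longrightarrow>
           split_interpolable (insert A L1) L2 (lab q)"
    and "\<And>A q. A \<in> seq_subfms (lab []) \<Longrightarrow> A \<notin> L2 \<Longrightarrow> q \<in> N \<Longrightarrow>
           split_interpolable L1 (insert A L2) (lab q)"
    and "p \<in> N"
  shows "split_interpolable L1 L2 (lab p)"
  using assms(5)
proof (induction p rule: wf_induct_rule[OF wf_child_rel])
  case (1 p)
  let ?ps = "map (\<lambda>i. lab (p @ [i])) [0..<arity (rl p)]"
  have right_premise: "p @ [1] \<in> N" "?ps ! 1 = lab (p @ [1])" if "rl p = BoxR"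
    using that child_in_tree_iff[OF \<open>p \<in> N\<close>] by simp_all
  have subfm: "A \<in> seq_subfms (lab [])" if "rl p = BoxR" "snd (?ps ! 1) = {#A#}" for A
  proof -
    have "A \<in> seq_subfms (lab (p @ [1]))"
      using that right_premise subfms_refl unfolding seq_subfms_def by fastforce
    then show ?thesis using seq_subfms_node right_premise(1)[OF that(1)] by blast
  qed
  show ?case
  proof (rule split_interpolable_rule[OF assms(1,2) rule_ok_node[OF \<open>p \<in> N\<close>]])
    fix i assume i: "i < length ?ps" "\<not> (rl p = BoxR \<and> i = 1)"
    then have "p @ [i] \<in> N" using child_in_tree_iff[OF \<open>p \<in> N\<close>] by simp
    with i(2) have "split_interpolable L1 L2 (lab (p @ [i]))"
      using 1 by (auto simp: child_rel_def)
    with i(1) show "split_interpolable L1 L2 (?ps ! i)" by simp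
  next
    fix A assume "rl p = BoxR" "snd (?ps ! 1) = {#A#}" "A \<notin> L1"
    then show "split_interpolable (insert A L1) L2 (?ps ! 1)"
      using assms(3) subfm right_premise by simp
  next
    fix A assume "rl p = BoxR" "snd (?ps ! 1) = {#A#}" "A \<notin> L2"
    then show "split_interpolable L1 (insert A L2) (?ps ! 1)"
      using assms(4) subfm right_premise by simp
  qed
qed

(* The right premise of (\<box>) adds its principal formula, a subformula of the root sequent,
   to \<Lambda>1 or \<Lambda>2. *)
lemma split_interpolable_node:
  assumes "finite L1" "finite L2" "p \<in> N"
  shows "split_interpolable L1 L2 (lab p)"
  using assms
proof (induction "card (seq_subfms (lab []) - L1) + card (seq_subfms (lab []) - L2)"
    arbitrary: L1 L2 p rule: less_induct)
  case less
  show ?case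
  proof (rule split_interpolable_node_from_extensions[OF less.prems(1,2) _ _ less.prems(3)])
    fix A q assume "A \<in> seq_subfms (lab [])" "A \<notin> L1" "q \<in> N"
    then show "split_interpolable (insert A L1) L2 (lab q)"
      using card_Diff_insert_less[OF finite_seq_subfms[of "lab []"], of A L1]
      by (intro less.hyps) (simp_all add: less.prems)
  next
    fix A q assume "A \<in> seq_subfms (lab [])" "A \<notin> L2" "q \<in> N"
    then show "split_interpolable L1 (insert A L2) (lab q)"
      using card_Diff_insert_less[OF finite_seq_subfms[of "lab []"], of A L2]
      by (intro less.hyps) (simp_all add: less.prems)
  qed
qed

end

theorem lemma7p1:
  fixes \<Lambda>1 \<Lambda>2 :: "'a fm set" and \<Gamma>1 \<Gamma>2 \<Delta>1 \<Delta>2 :: "'a fm multiset"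
  assumes "finite \<Lambda>1" and "finite \<Lambda>2"
    and "Grz_inf_provable (\<Gamma>1 + \<Gamma>2, \<Delta>1 + \<Delta>2)"
  shows "\<exists>I. pos I \<subseteq> neg_seq (\<Gamma>1, \<Delta>1) \<inter> pos_seq (\<Gamma>2, \<Delta>2)
           \<and> neg I \<subseteq> pos_seq (\<Gamma>1, \<Delta>1) \<inter> neg_seq (\<Gamma>2, \<Delta>2)
           \<and> (\<forall>xs ys. set xs = star \<Lambda>1 \<union> set_mset \<Gamma>1 \<and> set ys = set_mset \<Delta>1 \<union> {I}
                 \<longrightarrow> Grz (Imp (conj xs) (disj ys)))
           \<and> (\<forall>xs ys. set xs = star \<Lambda>2 \<union> {I} \<union> set_mset \<Gamma>2 \<and> set ys = set_mset \<Delta>2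
                 \<longrightarrow> Grz (Imp (conj xs) (disj ys)))"
proof -
  obtain N lab rl where tree: "inf_proof N lab rl" and root: "lab [] = (\<Gamma>1 + \<Gamma>2, \<Delta>1 + \<Delta>2)"
    using assms(3) unfolding Grz_inf_provable_def by blast
  have "split_interpolable \<Lambda>1 \<Lambda>2 (lab [])"
    using split_interpolable_node[OF tree assms(1,2) root_in_tree[OF tree]] .
  then have "has_interpolant \<Lambda>1 \<Lambda>2 (\<Gamma>1, \<Delta>1) (\<Gamma>2, \<Delta>2)"
    using root by (rule split_interpolableD)
  then obtain I where "interpolant \<Lambda>1 \<Lambda>2 (\<Gamma>1, \<Delta>1) (\<Gamma>2, \<Delta>2) I"
    unfolding has_interpolant_def by blast
  then show ?thesis
    unfolding interpolant_def fst_conv snd_conv by (intro exI[of _ I]) (blast intro: Grz_derivesD)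
qed

end
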